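(* Let $T\colon X\to X$ be a piecewise invertible map (with respect to a regular open partition $\mathcal U$) on a compact Hausdorff space $X$. Then the map $T'\colon X'\to X'$ is a local homeomorphism.
   Context: Let $X$ be compact Hausdorff. A set $U$ is regular open if $U=\mathrm{int}(\overline U)$. A regular open partition of $X$ is a finite family of nonempty, pairwise disjoint regular open sets whose closures cover $X$. For regular open partitions $\mathcal V,\mathcal W$, $\mathcal V\vee\mathcal W=\{V\cap W\ne\emptyset: V\in\mathcal V,W\in\mathcal W\}$; $\mathcal V\preceq\mathcal W$ means each element of $\mathcal W$ lies in a (necessarily unique) element of $\mathcal V$. A continuous $T\colon X\to X$ is piecewise invertible w.r.t. a regular open partition $\mathcal U=\{U_i\}_{i\in I}$, $C_i:=\overline{U_i}$, if each restriction $T_i\colon C_i\to T(C_i)$ is a homeomorphism and $T(U_i)=\mathrm{int}(T(C_i))$. For a regular open partition $\mathcal V=\{V_j\}$, put $\mathcal T_i=\{T(U_i\cap V_j):U_i\cap V_j\neq\emptyset\}\cup\{X\setminus T(C_i)\}$ (omitting empty sets), $T(\mathcal V)=\bigvee_i\mathcal T_i$, and $T^{-1}(\mathcal V)=\{T_i^{-1}(O): i\in I,\ O\in\mathcal V\vee T(\mathcal U),\ O\subseteq T(U_i)\}$; these are regular open partitions, and $T^\beta,T^{-\alpha}$ denote iterates of these operations. Set $\mathcal U_{m,n}=\bigvee_{0\le\alpha\le m,0\le\beta\le n}T^{-\alpha}(T^\beta(\mathcal U))$; for $(m',n')\ge(m,n)$ componentwise, $\mathcal U_{m,n}\preceq\mathcal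 U_{m',n'}$. Let $\bar X=\varprojlim\mathcal U_{m,n}$ (inverse limit of finite discrete sets), whose elements are families $\mathbf U=(U_{m,n})$, $U_{m,n}\in\mathcal U_{m,n}$, compatible under inclusion. Let $X'=\{(x,(U_{m,n}))\in X\times\bar X: x\in\overline{U_{m,n}}\ \forall m,n\}$ with the subspace topology, $\bar T\colon\bar X\to\bar X$, $\bar T((U_{m,n}))=(V_{m,n})$ where $V_{m,n}$ is the unique element of $\mathcal U_{m,n}$ containing $T(U_{m+1,n})$, and $T'(x,\mathbf U)=(Tx,\bar T\mathbf U)$. *)

theory Defs
  imports "HOL-Analysis.Analysis"
begin

text \<open>The compact Hausdorff space X is the universe of a type 'a of class t2_space,
  assumed compact in the theorem.\<close>

definition regular_open :: "'a::topological_space set \<Rightarrow> bool" where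
  "regular_open U \<longleftrightarrow> U = interior (closure U)"

definition ro_partition :: "'a::topological_space set set \<Rightarrow> bool" where
  "ro_partition P \<longleftrightarrow> finite P \<and> (\<forall>V\<in>P. V \<noteq> {} \<and> regular_open V)
     \<and> pairwise disjnt P \<and> (\<Union>V\<in>P. closure V) = UNIV"

definition pjoin :: "'a set set \<Rightarrow> 'a set set \<Rightarrow> 'a set set" where
  "pjoin P Q = {V \<inter> W | V W. V \<in> P \<and> W \<in> Q \<and> V \<inter> W \<noteq> {}}"

text \<open>Join of a finite indexed family of partitions (iterated binary join);
  for the empty index set this is the trivial partition.\<close>
definition pJoin :: "'i set \<Rightarrow> ('i \<Rightarrow> 'a set set) \<Rightarrow> 'a set set" where
  "pJoin I P = {S. S \<noteq> {} \<and> (\<exists>f. (\<forall>i\<in>I. f i \<in> P i) \<and> S = (\<Inter>i\<in>I. f i))}"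

definition prefines :: "'a set set \<Rightarrow> 'a set set \<Rightarrow> bool" where
  "prefines V W \<longleftrightarrow> (\<forall>B\<in>W. \<exists>A\<in>V. B \<subseteq> A)"

definition piecewise_invertible :: "('a::topological_space \<Rightarrow> 'a) \<Rightarrow> 'a set set \<Rightarrow> bool" where
  "piecewise_invertible T \<U> \<longleftrightarrow> ro_partition \<U> \<and> continuous_on UNIV T \<and>
     (\<forall>U\<in>\<U>. (\<exists>g. homeomorphism (closure U) (T ` closure U) T g)
             \<and> T ` U = interior (T ` closure U))"

definition Tfam :: "('a::topological_space \<Rightarrow> 'a) \<Rightarrow> 'a set \<Rightarrow> 'a set set \<Rightarrow> 'a set set" where
  "Tfam T U \<V> = ({T ` (U \<inter> V) | V. V \<in> \<V> \<and> U \<inter> V \<noteq> {}} \<union> {UNIV - T ` closure U}) - {{}}"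

definition Tfwd :: "('a::topological_space \<Rightarrow> 'a) \<Rightarrow> 'a set set \<Rightarrow> 'a set set \<Rightarrow> 'a set set" where
  "Tfwd T \<U> \<V> = pJoin \<U> (\<lambda>U. Tfam T U \<V>)"

definition Tinv :: "('a::topological_space \<Rightarrow> 'a) \<Rightarrow> 'a set set \<Rightarrow> 'a set set \<Rightarrow> 'a set set" where
  "Tinv T \<U> \<V> = {{x \<in> closure U. T x \<in> Ob} | U Ob.
       U \<in> \<U> \<and> Ob \<in> pjoin \<V> (Tfwd T \<U> \<U>) \<and> Ob \<subseteq> T ` U}"

definition Umn :: "('a::topological_space \<Rightarrow> 'a) \<Rightarrow> 'a set set \<Rightarrow> nat \<Rightarrow> nat \<Rightarrow> 'a set set" where
  "Umn T \<U> m n = pJoin {(\<alpha>, \<beta>). \<alpha> \<le> m \<and> \<beta> \<le> n}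
      (\<lambda>(\<alpha>, \<beta>). (Tinv T \<U> ^^ \<alpha>) ((Tfwd T \<U> ^^ \<beta>) \<U>))"

text \<open>The inverse limit \<bar>X, as a set of compatible families.\<close>
definition Xbar :: "('a::topological_space \<Rightarrow> 'a) \<Rightarrow> 'a set set \<Rightarrow> (nat \<times> nat \<Rightarrow> 'a set) set" where
  "Xbar T \<U> = {\<UU>. (\<forall>m n. \<UU> (m, n) \<in> Umn T \<U> m n) \<and>
      (\<forall>m n m' n'. m \<le> m' \<and> n \<le> n' \<longrightarrow> \<UU> (m', n') \<subseteq> \<UU> (m, n))}"

definition Xbar_top :: "('a::topological_space \<Rightarrow> 'a) \<Rightarrow> 'a set set \<Rightarrow> (nat \<times> nat \<Rightarrow> 'a set) topology" where
  "Xbar_top T \<U> = subtopology (product_topology (\<lambda>_. discrete_topology UNIV) UNIV) (Xbar T \<U>)"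

definition Xprime :: "('a::topological_space \<Rightarrow> 'a) \<Rightarrow> 'a set set \<Rightarrow> ('a \<times> (nat \<times> nat \<Rightarrow> 'a set)) set" where
  "Xprime T \<U> = {(x, \<UU>). \<UU> \<in> Xbar T \<U> \<and> (\<forall>m n. x \<in> closure (\<UU> (m, n)))}"

definition Xprime_top :: "('a::topological_space \<Rightarrow> 'a) \<Rightarrow> 'a set set \<Rightarrow> ('a \<times> (nat \<times> nat \<Rightarrow> 'a set)) topology" where
  "Xprime_top T \<U> = subtopology (prod_topology euclidean (Xbar_top T \<U>)) (Xprime T \<U>)"

definition Tbar :: "('a::topological_space \<Rightarrow> 'a) \<Rightarrow> 'a set set \<Rightarrow> (nat \<times> nat \<Rightarrow> 'a set) \<Rightarrow> (nat \<times> nat \<Rightarrow> 'a set)" where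
  "Tbar T \<U> \<UU> = (\<lambda>(m, n). THE V. V \<in> Umn T \<U> m n \<and> T ` \<UU> (Suc m, n) \<subseteq> V)"

definition Tprime :: "('a::topological_space \<Rightarrow> 'a) \<Rightarrow> 'a set set \<Rightarrow> 'a \<times> (nat \<times> nat \<Rightarrow> 'a set) \<Rightarrow> 'a \<times> (nat \<times> nat \<Rightarrow> 'a set)" where
  "Tprime T \<U> p = (T (fst p), Tbar T \<U> (snd p))"

definition local_homeomorphism :: "'a topology \<Rightarrow> 'b topology \<Rightarrow> ('a \<Rightarrow> 'b) \<Rightarrow> bool" where
  "local_homeomorphism X Y f \<longleftrightarrow> f ` topspace X \<subseteq> topspace Y \<and>
     (\<forall>x\<in>topspace X. \<exists>W. openin X W \<and> x \<in> W \<and> openin Y (f ` W) \<and>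
        homeomorphic_map (subtopology X W) (subtopology Y (f ` W)) f)"

end

theory Submission
  imports Defs
begin

text \<open>The elements of each \<open>\<U>\<^sub>m\<^sub>,\<^sub>n\<close> are nonempty and pairwise disjoint, so an element
  is determined by any nonempty subset of it. Hence \<open>T'\<close> is well defined, and the
  \<open>(k, n)\<close>-coordinate of \<open>T'(x, \<UU>)\<close> depends only on the \<open>(k + 1, n)\<close>-coordinate of \<open>\<UU>\<close>, which
  makes \<open>T'\<close> continuous. Every point has \<open>(1, 0)\<close>-coordinate of the form \<open>T\<^sub>i\<^sup>-\<^sup>1(V)\<close> with
  \<open>V \<in> \<U>\<^sub>0\<^sub>,\<^sub>1\<close>. On the clopen set \<open>W\<close> of points sharing this coordinate, \<open>T'\<close> is a bijection
  onto the clopen set of points with \<open>(0, 1)\<close>-coordinate \<open>V\<close>; its inverse sends \<open>(y, \<VV>)\<close>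
  to \<open>T\<^sub>i\<^sup>-\<^sup>1(y)\<close> together with the family whose \<open>(k, n)\<close>-coordinate is the element of
  \<open>\<U>\<^sub>k\<^sub>,\<^sub>n\<close> containing \<open>T\<^sub>i\<^sup>-\<^sup>1(\<VV>\<^sub>k\<^sub>,\<^sub>n\<^sub>+\<^sub>1)\<close>, and it is continuous because \<open>T\<^sub>i\<^sup>-\<^sup>1\<close> is.\<close>

section \<open>Disjoint families and their joins\<close>

definition disjoint_nonempty :: "'a set set \<Rightarrow> bool" where
  "disjoint_nonempty F \<longleftrightarrow> {} \<notin> F \<and> disjoint F"

lemma disjoint_nonempty_unique:
  assumes "disjoint_nonempty F" "A \<in> F" "B \<in> F" "S \<subseteq> A" "S \<subseteq> B" "S \<noteq> {}"
  shows "A = B"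
  using assms unfolding disjoint_nonempty_def pairwise_def disjnt_def by blast

lemma disjoint_nonempty_disjnt:
  "disjoint_nonempty F \<Longrightarrow> A \<in> F \<Longrightarrow> B \<in> F \<Longrightarrow> A \<noteq> B \<Longrightarrow> disjnt A B"
  unfolding disjoint_nonempty_def pairwise_def by blast

lemma pJoin_mem_nonempty: "B \<in> pJoin I P \<Longrightarrow> B \<noteq> {}"
  unfolding pJoin_def by blast

lemma pJoin_mem_subset: "B \<in> pJoin I P \<Longrightarrow> i \<in> I \<Longrightarrow> \<exists>A\<in>P i. B \<subseteq> A"
  unfolding pJoin_def by blast

lemma subset_pJoin_memI:
  assumes "S \<noteq> {}" "\<And>i. i \<in> I \<Longrightarrow> \<exists>A\<in>P i. S \<subseteq> A"
  shows "\<exists>B\<in>pJoin I P. S \<subseteq> B"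
proof -
  from assms(2) have "\<forall>i\<in>I. \<exists>A\<in>P i. S \<subseteq> A" by blast
  then obtain f where f: "\<forall>i\<in>I. f i \<in> P i \<and> S \<subseteq> f i" by metis
  then have "S \<subseteq> (\<Inter>i\<in>I. f i)" by blast
  moreover from this have "(\<Inter>i\<in>I. f i) \<in> pJoin I P"
    using f assms(1) unfolding pJoin_def by blast
  ultimately show ?thesis by blast
qed

lemma pJoin_refines_pJoin_subindex:
  assumes "B \<in> pJoin J P" "I \<subseteq> J" shows "\<exists>A\<in>pJoin I P. B \<subseteq> A"
proof (rule subset_pJoin_memI)
  show "B \<noteq> {}" using assms(1) by (rule pJoin_mem_nonempty)
  show "\<exists>A\<in>P i. B \<subseteq> A" if "i \<in> I" for i
    using assms(1) by (rule pJoin_mem_subset) (use assms(2) that in blast)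
qed

lemma disjoint_nonempty_pJoin:
  assumes "\<And>i. i \<in> I \<Longrightarrow> disjoint_nonempty (P i)"
  shows "disjoint_nonempty (pJoin I P)"
  unfolding disjoint_nonempty_def
proof (intro conjI pairwiseI)
  show "{} \<notin> pJoin I P" using pJoin_mem_nonempty by blast
next
  fix A B assume A: "A \<in> pJoin I P" and B: "B \<in> pJoin I P" and "A \<noteq> B"
  from A obtain f where f: "\<forall>i\<in>I. f i \<in> P i" "A = (\<Inter>i\<in>I. f i)"
    unfolding pJoin_def by blast
  from B obtain g where g: "\<forall>i\<in>I. g i \<in> P i" "B = (\<Inter>i\<in>I. g i)"
    unfolding pJoin_def by blast
  have "\<exists>i\<in>I. f i \<noteq> g i"
  proof (rule ccontr)
    assume "\<not> ?thesis"
    then have "A = B" using f(2) g(2) by auto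
    with \<open>A \<noteq> B\<close> show False ..
  qed
  then obtain i where i: "i \<in> I" "f i \<noteq> g i" by blast
  then have "disjnt (f i) (g i)" using assms f g by (intro disjoint_nonempty_disjnt) auto
  moreover have "A \<subseteq> f i" "B \<subseteq> g i" using f g i by auto
  ultimately show "disjnt A B" unfolding disjnt_def by blast
qed

lemma disjoint_nonempty_pjoin:
  assumes "disjoint_nonempty P" "disjoint_nonempty Q"
  shows "disjoint_nonempty (pjoin P Q)"
  unfolding disjoint_nonempty_def
proof (intro conjI pairwiseI)
  show "{} \<notin> pjoin P Q" by (auto simp: pjoin_def)
next
  fix A B assume A: "A \<in> pjoin P Q" and B: "B \<in> pjoin P Q" and "A \<noteq> B"
  from A obtain V W where v: "V \<in> P" "W \<in> Q" "A = V \<inter> W" unfolding pjoin_def by blast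
  from B obtain V' W' where v': "V' \<in> P" "W' \<in> Q" "B = V' \<inter> W'" unfolding pjoin_def by blast
  have "V \<noteq> V' \<or> W \<noteq> W'" using \<open>A \<noteq> B\<close> v v' by auto
  then have "disjnt V V' \<or> disjnt W W'"
    using assms v v' disjoint_nonempty_disjnt[of P V V'] disjoint_nonempty_disjnt[of Q W W'] by blast
  then show "disjnt A B" unfolding v(3) v'(3) disjnt_def by blast
qed


section \<open>The topology of \<open>X'\<close>\<close>

lemma topspace_Xbar_top: "topspace (Xbar_top T \<U>) = Xbar T \<U>"
  unfolding Xbar_top_def by simp

lemma topspace_Xprime_top: "topspace (Xprime_top T \<U>) = Xprime T \<U>"
  unfolding Xprime_top_def by (auto simp: topspace_Xbar_top Xprime_def)

lemma continuous_map_Xprime_fst: "continuous_map (Xprime_top T \<U>) euclidean fst"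
  unfolding Xprime_top_def by (rule continuous_map_from_subtopology[OF continuous_map_fst])

lemma continuous_map_Xprime_coordinate:
  "continuous_map (Xprime_top T \<U>) (discrete_topology UNIV) (\<lambda>q. \<phi> (snd q i))"
proof -
  have "continuous_map (Xprime_top T \<U>) (Xbar_top T \<U>) snd"
    unfolding Xprime_top_def by (rule continuous_map_from_subtopology[OF continuous_map_snd])
  moreover have "continuous_map (Xbar_top T \<U>) (discrete_topology UNIV) (\<lambda>\<UU>. \<phi> (\<UU> i))"
  proof -
    have "continuous_map (Xbar_top T \<U>) (discrete_topology UNIV) (\<lambda>\<UU>. \<UU> i)"
      unfolding Xbar_top_def
      by (rule continuous_map_from_subtopology[OF continuous_map_product_projection]) simp
    from continuous_map_compose[OF this, of _ \<phi>] show ?thesis by (simp add: o_def)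
  qed
  ultimately show ?thesis using continuous_map_compose[of _ _ snd] by (simp add: o_def)
qed

lemma continuous_map_into_Xbar_top:
  assumes "\<And>q. q \<in> topspace Z \<Longrightarrow> F q \<in> Xbar T \<U>"
    and "\<And>i. continuous_map Z (discrete_topology UNIV) (\<lambda>q. F q i)"
  shows "continuous_map Z (Xbar_top T \<U>) F"
  unfolding Xbar_top_def using assms
  by (intro continuous_map_into_subtopology) (auto simp: continuous_map_componentwise_UNIV)

lemma continuous_map_into_Xprime_top:
  assumes "continuous_map Z euclidean (\<lambda>q. fst (F q))"
    and "continuous_map Z (Xbar_top T \<U>) (\<lambda>q. snd (F q))"
    and "\<And>q. q \<in> topspace Z \<Longrightarrow> F q \<in> Xprime T \<U>"
  shows "continuous_map Z (Xprime_top T \<U>) F"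
  unfolding Xprime_top_def using assms
  by (intro continuous_map_into_subtopology) (auto simp: continuous_map_pairwise o_def)

section \<open>The partitions \<open>\<U>\<^sub>m\<^sub>,\<^sub>n\<close> and the map \<open>T'\<close>\<close>

locale piecewise_invertible_map =
  fixes T :: "'a::t2_space \<Rightarrow> 'a" and \<U> :: "'a set set"
  assumes compact_space: "compact (UNIV :: 'a set)"
    and piecewise_invertible: "piecewise_invertible T \<U>"
begin

lemma continuous_T: "continuous_on UNIV T"
  using piecewise_invertible by (simp add: piecewise_invertible_def)

lemma homeomorphism_piece:
  "U \<in> \<U> \<Longrightarrow> \<exists>g. homeomorphism (closure U) (T ` closure U) T g"
  using piecewise_invertible by (simp add: piecewise_invertible_def)

lemma inj_on_piece: "U \<in> \<U> \<Longrightarrow> inj_on T (closure U)"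
  using homeomorphism_piece by (metis homeomorphism_def inj_on_inverseI)

lemma closed_image_closure: "closed (T ` closure U)"
proof -
  have "compact (closure U)"
    using compact_Int_closed[OF compact_space closed_closure[of U]] by simp
  then show ?thesis
    using continuous_T by (meson compact_continuous_image compact_imp_closed continuous_on_subset subset_UNIV)
qed

lemma disjoint_nonempty_partition: "disjoint_nonempty \<U>"
  using piecewise_invertible
  unfolding piecewise_invertible_def ro_partition_def disjoint_nonempty_def by blast

abbreviation piece_preimage :: "'a set \<Rightarrow> 'a set \<Rightarrow> 'a set" where
  "piece_preimage U Y \<equiv> {x \<in> closure U. T x \<in> Y}"

lemma piece_preimage_image_subset: "U \<in> \<U> \<Longrightarrow> S \<subseteq> closure U \<Longrightarrow> piece_preimage U (T ` S) \<subseteq> S"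
  using inj_on_piece unfolding inj_on_def by blast

lemma piece_preimage_subset:
  assumes "U \<in> \<U>" "Y \<subseteq> T ` U"
  shows "piece_preimage U Y \<subseteq> U"
proof -
  have "piece_preimage U Y \<subseteq> piece_preimage U (T ` U)" using assms(2) by blast
  also have "\<dots> \<subseteq> U" using assms(1) closure_subset by (rule piece_preimage_image_subset)
  finally show ?thesis .
qed

lemma image_piece_preimage:
  assumes "Y \<subseteq> T ` U"
  shows "T ` piece_preimage U Y = Y"
proof
  show "Y \<subseteq> T ` piece_preimage U Y"
  proof
    fix y assume "y \<in> Y"
    with assms obtain u where "u \<in> U" "y = T u" by blast
    with \<open>y \<in> Y\<close> closure_subset show "y \<in> T ` piece_preimage U Y" by blast
  qed
qed blast

lemma piece_preimage_nonempty:
  assumes "Y \<subseteq> T ` U" "Y \<noteq> {}"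
  shows "piece_preimage U Y \<noteq> {}"
  using image_piece_preimage[OF assms(1)] assms(2) by force

lemma disjoint_nonempty_Tfam:
  assumes U: "U \<in> \<U>" and P: "disjoint_nonempty P"
  shows "disjoint_nonempty (Tfam T U P)"
  unfolding disjoint_nonempty_def
proof (intro conjI pairwiseI)
  show "{} \<notin> Tfam T U P" by (simp add: Tfam_def)
next
  have images_disjnt: "disjnt (T ` (U \<inter> V1)) (T ` (U \<inter> V2))"
    if "V1 \<in> P" "V2 \<in> P" "T ` (U \<inter> V1) \<noteq> T ` (U \<inter> V2)" for V1 V2
  proof -
    from that have "disjnt V1 V2" using P disjoint_nonempty_disjnt by blast
    moreover have "T ` (U \<inter> V1) \<inter> T ` (U \<inter> V2) = T ` ((U \<inter> V1) \<inter> (U \<inter> V2))"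
      using inj_on_piece[OF U] closure_subset by (intro inj_on_image_Int[symmetric]) auto
    ultimately show ?thesis by (auto simp: disjnt_def)
  qed
  have outside_disjnt: "disjnt (T ` (U \<inter> V)) (UNIV - T ` closure U)" for V
    using closure_subset by (auto simp: disjnt_def)
  have cases: "(\<exists>V\<in>P. X = T ` (U \<inter> V)) \<or> X = UNIV - T ` closure U" if "X \<in> Tfam T U P" for X
    using that by (auto simp: Tfam_def)
  fix A B assume A: "A \<in> Tfam T U P" and B: "B \<in> Tfam T U P" and "A \<noteq> B"
  show "disjnt A B"
  proof (cases "A = UNIV - T ` closure U")
    case True
    with cases[OF B] \<open>A \<noteq> B\<close> obtain V where "B = T ` (U \<inter> V)" by blast
    with True show ?thesis using disjnt_sym[OF outside_disjnt] by simp
  next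
    case False
    with cases[OF A] obtain V where V: "V \<in> P" "A = T ` (U \<inter> V)" by blast
    from cases[OF B] show ?thesis
    proof
      assume "\<exists>V'\<in>P. B = T ` (U \<inter> V')"
      then obtain V' where V': "V' \<in> P" "B = T ` (U \<inter> V')" by blast
      show ?thesis unfolding V(2) V'(2) using \<open>A \<noteq> B\<close> V V' by (intro images_disjnt) auto
    next
      assume "B = UNIV - T ` closure U"
      then show ?thesis unfolding V(2) by (simp add: outside_disjnt)
    qed
  qed
qed

lemma disjoint_nonempty_Tfwd: "disjoint_nonempty P \<Longrightarrow> disjoint_nonempty (Tfwd T \<U> P)"
  unfolding Tfwd_def by (intro disjoint_nonempty_pJoin disjoint_nonempty_Tfam)

lemma Tinv_memI:
  "U \<in> \<U> \<Longrightarrow> Y \<in> pjoin P (Tfwd T \<U> \<U>) \<Longrightarrow> Y \<subseteq> T ` U \<Longrightarrow> piece_preimage U Y \<in> Tinv T \<U> P"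
  unfolding Tinv_def by blast

lemma disjoint_nonempty_Tinv:
  assumes P: "disjoint_nonempty P"
  shows "disjoint_nonempty (Tinv T \<U> P)"
  unfolding disjoint_nonempty_def
proof (intro conjI pairwiseI)
  show "{} \<notin> Tinv T \<U> P"
  proof
    assume "{} \<in> Tinv T \<U> P"
    then obtain U Y where "Y \<in> pjoin P (Tfwd T \<U> \<U>)" "Y \<subseteq> T ` U" "piece_preimage U Y = {}"
      unfolding Tinv_def by blast
    moreover from this(1) have "Y \<noteq> {}" by (auto simp: pjoin_def)
    ultimately show False using piece_preimage_nonempty by blast
  qed
next
  have PU: "disjoint_nonempty (pjoin P (Tfwd T \<U> \<U>))"
    using P disjoint_nonempty_partition
    by (intro disjoint_nonempty_pjoin disjoint_nonempty_Tfwd)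
  fix A B assume A: "A \<in> Tinv T \<U> P" and B: "B \<in> Tinv T \<U> P" and "A \<noteq> B"
  from A obtain U Y where a: "U \<in> \<U>" "Y \<in> pjoin P (Tfwd T \<U> \<U>)" "Y \<subseteq> T ` U"
    "A = piece_preimage U Y" unfolding Tinv_def by blast
  from B obtain U' Y' where b: "U' \<in> \<U>" "Y' \<in> pjoin P (Tfwd T \<U> \<U>)" "Y' \<subseteq> T ` U'"
    "B = piece_preimage U' Y'" unfolding Tinv_def by blast
  show "disjnt A B" unfolding disjnt_def
  proof (rule ccontr)
    assume "A \<inter> B \<noteq> {}"
    then obtain x where x: "x \<in> A" "x \<in> B" by blast
    have "x \<in> U" "x \<in> U'" using piece_preimage_subset a b x by blast+
    then have "U = U'"
      using disjoint_nonempty_unique[OF disjoint_nonempty_partition a(1) b(1), of "{x}"] by blast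
    moreover have "Y = Y'"
      using disjoint_nonempty_unique[OF PU a(2) b(2), of "{T x}"] x a b by auto
    ultimately show False using a b \<open>A \<noteq> B\<close> by simp
  qed
qed

abbreviation iterate_partition :: "nat \<Rightarrow> nat \<Rightarrow> 'a set set" where
  "iterate_partition \<alpha> \<beta> \<equiv> (Tinv T \<U> ^^ \<alpha>) ((Tfwd T \<U> ^^ \<beta>) \<U>)"

lemma disjoint_nonempty_iterate_partition: "disjoint_nonempty (iterate_partition \<alpha> \<beta>)"
proof -
  have "disjoint_nonempty ((Tfwd T \<U> ^^ \<beta>) \<U>)"
    by (induction \<beta>) (simp_all add: disjoint_nonempty_partition disjoint_nonempty_Tfwd)
  then show ?thesis by (induction \<alpha>) (simp_all add: disjoint_nonempty_Tinv)
qed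

lemma disjoint_nonempty_Umn: "disjoint_nonempty (Umn T \<U> m n)"
  unfolding Umn_def by (intro disjoint_nonempty_pJoin) (auto simp: disjoint_nonempty_iterate_partition)

lemma Umn_unique:
  "A \<in> Umn T \<U> m n \<Longrightarrow> B \<in> Umn T \<U> m n \<Longrightarrow> S \<subseteq> A \<Longrightarrow> S \<subseteq> B \<Longrightarrow> S \<noteq> {} \<Longrightarrow> A = B"
  using disjoint_nonempty_unique[OF disjoint_nonempty_Umn] by blast

lemma the_Umn_superset_eq:
  assumes "S \<noteq> {}" "E \<in> Umn T \<U> k n" "S \<subseteq> E"
  shows "(THE E. E \<in> Umn T \<U> k n \<and> S \<subseteq> E) = E"
  using assms Umn_unique by (intro the_equality) blast+

lemma Umn_mem_nonempty: "A \<in> Umn T \<U> m n \<Longrightarrow> A \<noteq> {}"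
  unfolding Umn_def by (rule pJoin_mem_nonempty)

lemma Umn_refines_Umn:
  "m \<le> m' \<Longrightarrow> n \<le> n' \<Longrightarrow> B \<in> Umn T \<U> m' n' \<Longrightarrow> \<exists>A\<in>Umn T \<U> m n. B \<subseteq> A"
  unfolding Umn_def by (erule pJoin_refines_pJoin_subindex) auto

lemma Umn_mem_subset:
  assumes "B \<in> Umn T \<U> m n" "\<alpha> \<le> m" "\<beta> \<le> n"
  shows "\<exists>A\<in>iterate_partition \<alpha> \<beta>. B \<subseteq> A"
  using pJoin_mem_subset[OF assms(1)[unfolded Umn_def], of "(\<alpha>, \<beta>)"] assms(2,3) by simp

lemma subset_Umn_memI:
  assumes "S \<noteq> {}" "\<And>\<alpha> \<beta>. \<alpha> \<le> m \<Longrightarrow> \<beta> \<le> n \<Longrightarrow> \<exists>A\<in>iterate_partition \<alpha> \<beta>. S \<subseteq> A"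
  shows "\<exists>B\<in>Umn T \<U> m n. S \<subseteq> B"
  unfolding Umn_def by (rule subset_pJoin_memI[OF assms(1)]) (use assms(2) in auto)

lemma Xbar_Umn: "\<UU> \<in> Xbar T \<U> \<Longrightarrow> \<UU> (m, n) \<in> Umn T \<U> m n"
  unfolding Xbar_def by blast

lemma Xbar_antimono: "\<UU> \<in> Xbar T \<U> \<Longrightarrow> m \<le> m' \<Longrightarrow> n \<le> n' \<Longrightarrow> \<UU> (m', n') \<subseteq> \<UU> (m, n)"
  unfolding Xbar_def by blast

lemma Xbar_nonempty: "\<UU> \<in> Xbar T \<U> \<Longrightarrow> \<UU> (m, n) \<noteq> {}"
  using Xbar_Umn Umn_mem_nonempty by blast

lemma Xbar_memI:
  assumes F: "\<And>m n. F (m, n) \<in> Umn T \<U> m n"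
    and S: "\<And>m n. S m n \<subseteq> F (m, n)" "\<And>m n. S m n \<noteq> {}"
    and S_antimono: "\<And>m n m' n'. m \<le> m' \<Longrightarrow> n \<le> n' \<Longrightarrow> S m' n' \<subseteq> S m n"
  shows "F \<in> Xbar T \<U>"
  unfolding Xbar_def
proof (intro CollectI conjI allI impI)
  show "F (m, n) \<in> Umn T \<U> m n" for m n by (rule F)
next
  fix m n m' n' :: nat assume "m \<le> m' \<and> n \<le> n'"
  then have le: "m \<le> m'" "n \<le> n'" by simp_all
  obtain E where E: "E \<in> Umn T \<U> m n" "F (m', n') \<subseteq> E"
    using Umn_refines_Umn[OF le F] by blast
  have "S m' n' \<subseteq> E" using S(1) E(2) by (rule order_trans)
  moreover have "S m' n' \<subseteq> F (m, n)" using S_antimono[OF le] S(1) by (rule order_trans)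
  ultimately have "E = F (m, n)" by (rule Umn_unique[OF E(1) F _ _ S(2)])
  with E(2) show "F (m', n') \<subseteq> F (m, n)" by simp
qed

lemma Tbar_exists:
  assumes "\<UU> \<in> Xbar T \<U>"
  shows "\<exists>E\<in>Umn T \<U> k n. T ` \<UU> (Suc k, n) \<subseteq> E"
proof (rule subset_Umn_memI)
  show "T ` \<UU> (Suc k, n) \<noteq> {}" using Xbar_nonempty[OF assms] by blast
next
  fix \<alpha> \<beta> assume "\<alpha> \<le> k" "\<beta> \<le> n"
  then obtain A where A: "A \<in> Tinv T \<U> (iterate_partition \<alpha> \<beta>)" "\<UU> (Suc k, n) \<subseteq> A"
    using Umn_mem_subset[OF Xbar_Umn[OF assms, of "Suc k" n], of "Suc \<alpha>" \<beta>] by auto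
  then obtain U G H where "A = piece_preimage U (G \<inter> H)" "G \<in> iterate_partition \<alpha> \<beta>"
    unfolding Tinv_def pjoin_def by blast
  with A(2) show "\<exists>A\<in>iterate_partition \<alpha> \<beta>. T ` \<UU> (Suc k, n) \<subseteq> A" by blast
qed

lemma Tbar_eqI:
  assumes "\<UU> \<in> Xbar T \<U>" "E \<in> Umn T \<U> k n" "T ` \<UU> (Suc k, n) \<subseteq> E"
  shows "Tbar T \<U> \<UU> (k, n) = E"
  unfolding Tbar_def prod.case
  by (rule the_Umn_superset_eq[OF _ assms(2,3)]) (simp add: Xbar_nonempty[OF assms(1)])

lemma
  assumes "\<UU> \<in> Xbar T \<U>"
  shows Tbar_Umn: "Tbar T \<U> \<UU> (k, n) \<in> Umn T \<U> k n"
    and image_subset_Tbar: "T ` \<UU> (Suc k, n) \<subseteq> Tbar T \<U> \<UU> (k, n)"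
proof -
  obtain E where "E \<in> Umn T \<U> k n" "T ` \<UU> (Suc k, n) \<subseteq> E"
    using Tbar_exists[OF assms] by blast
  with Tbar_eqI[OF assms this] show "Tbar T \<U> \<UU> (k, n) \<in> Umn T \<U> k n"
    "T ` \<UU> (Suc k, n) \<subseteq> Tbar T \<U> \<UU> (k, n)" by simp_all
qed

lemma Tbar_in_Xbar:
  assumes "\<UU> \<in> Xbar T \<U>"
  shows "Tbar T \<U> \<UU> \<in> Xbar T \<U>"
proof (rule Xbar_memI[where S = "\<lambda>m n. T ` \<UU> (Suc m, n)"])
  show "Tbar T \<U> \<UU> (m, n) \<in> Umn T \<U> m n" for m n by (rule Tbar_Umn[OF assms])
  show "T ` \<UU> (Suc m, n) \<subseteq> Tbar T \<U> \<UU> (m, n)" for m n by (rule image_subset_Tbar[OF assms])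
  show "T ` \<UU> (Suc m, n) \<noteq> {}" for m n using Xbar_nonempty[OF assms] by simp
  show "T ` \<UU> (Suc m', n') \<subseteq> T ` \<UU> (Suc m, n)" if "m \<le> m'" "n \<le> n'" for m n m' n'
    using Xbar_antimono[OF assms] that by (simp add: image_mono)
qed

lemma Tprime_in_Xprime:
  assumes "p \<in> Xprime T \<U>"
  shows "Tprime T \<U> p \<in> Xprime T \<U>"
proof -
  obtain x \<UU> where p: "p = (x, \<UU>)" by (cases p)
  have \<UU>: "\<UU> \<in> Xbar T \<U>" and x: "\<And>m n. x \<in> closure (\<UU> (m, n))"
    using assms unfolding p Xprime_def by auto
  have "T x \<in> closure (Tbar T \<U> \<UU> (m, n))" for m n
  proof -
    have "T ` closure (\<UU> (Suc m, n)) \<subseteq> closure (T ` \<UU> (Suc m, n))"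
      by (rule continuous_image_closure_subset[OF continuous_T]) simp
    also have "\<dots> \<subseteq> closure (Tbar T \<U> \<UU> (m, n))"
      using image_subset_Tbar[OF \<UU>] by (rule closure_mono)
    finally show ?thesis using x by blast
  qed
  then show ?thesis unfolding p Tprime_def Xprime_def using Tbar_in_Xbar[OF \<UU>] by simp
qed

lemma Tfwd_mem_subset_image:
  assumes H: "H \<in> Tfwd T \<U> P" and U: "U \<in> \<U>" and meets: "H \<inter> T ` U \<noteq> {}"
  shows "\<exists>E\<in>P. H \<subseteq> T ` (U \<inter> E)"
proof -
  obtain A where A: "A \<in> Tfam T U P" "H \<subseteq> A"
    using pJoin_mem_subset[OF H[unfolded Tfwd_def] U] by blast
  from meets closure_subset have "A \<noteq> UNIV - T ` closure U" using A(2) by blast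
  with A show ?thesis unfolding Tfam_def by blast
qed

lemma
  assumes "\<VV> \<in> Xbar T \<U>" "\<VV> (0, 1) \<subseteq> T ` U"
  shows Xbar_subset_image_piece: "\<VV> (k, Suc n) \<subseteq> T ` U"
    and closure_Xbar_subset_image_piece: "closure (\<VV> (k, Suc n)) \<subseteq> T ` closure U"
    and piece_preimage_Xbar_nonempty: "piece_preimage U (\<VV> (k, Suc n)) \<noteq> {}"
proof -
  have "\<VV> (k, Suc n) \<subseteq> \<VV> (0, 1)" by (rule Xbar_antimono[OF assms(1)]) simp_all
  then show sub: "\<VV> (k, Suc n) \<subseteq> T ` U" using assms(2) by (rule order_trans)
  then show "closure (\<VV> (k, Suc n)) \<subseteq> T ` closure U"
    using closure_subset closed_image_closure by (meson closure_minimal image_mono order_trans)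
  show "piece_preimage U (\<VV> (k, Suc n)) \<noteq> {}"
    by (rule piece_preimage_nonempty[OF sub Xbar_nonempty[OF assms(1)]])
qed

text \<open>Under \<open>T\<^sub>i\<^sup>-\<^sup>1\<close>, an element of \<open>T\<^sup>\<beta>\<^sup>+\<^sup>1(\<U>)\<close> lands in one of \<open>T\<^sup>\<beta>(\<U>)\<close>, and
  \<open>G \<inter> H\<close> with \<open>G \<in> T\<^sup>-\<^sup>\<alpha>(\<dots>)\<close>, \<open>H \<in> T(\<U>)\<close> is pulled back to an element of \<open>T\<^sup>-\<^sup>\<alpha>\<^sup>-\<^sup>1(\<dots>)\<close>.\<close>

lemma piece_preimage_subset_Umn:
  assumes \<VV>: "\<VV> \<in> Xbar T \<U>" and U: "U \<in> \<U>" and sub: "\<VV> (0, 1) \<subseteq> T ` U"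
  shows "\<exists>E\<in>Umn T \<U> k n. piece_preimage U (\<VV> (k, Suc n)) \<subseteq> E"
proof (rule subset_Umn_memI)
  show "piece_preimage U (\<VV> (k, Suc n)) \<noteq> {}" by (rule piece_preimage_Xbar_nonempty[OF \<VV> sub])
  have in_image: "\<VV> (k, Suc n) \<subseteq> T ` U" by (rule Xbar_subset_image_piece[OF \<VV> sub])
  have ne: "\<VV> (k, Suc n) \<noteq> {}" by (rule Xbar_nonempty[OF \<VV>])
  fix \<alpha> \<beta> assume "\<alpha> \<le> k" "\<beta> \<le> n"
  show "\<exists>A\<in>iterate_partition \<alpha> \<beta>. piece_preimage U (\<VV> (k, Suc n)) \<subseteq> A"
  proof (cases \<alpha>)
    case 0
    obtain G where G: "G \<in> Tfwd T \<U> (iterate_partition 0 \<beta>)" "\<VV> (k, Suc n) \<subseteq> G"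
      using Umn_mem_subset[OF Xbar_Umn[OF \<VV>, of k "Suc n"], of 0 "Suc \<beta>"] \<open>\<beta> \<le> n\<close> by auto
    moreover have "G \<inter> T ` U \<noteq> {}" using G(2) in_image ne by blast
    ultimately obtain E where E: "E \<in> iterate_partition 0 \<beta>" "G \<subseteq> T ` (U \<inter> E)"
      using Tfwd_mem_subset_image U by blast
    have "piece_preimage U (\<VV> (k, Suc n)) \<subseteq> piece_preimage U (T ` (U \<inter> E))"
      using G(2) E(2) by blast
    also have "\<dots> \<subseteq> U \<inter> E"
      using U closure_subset by (intro piece_preimage_image_subset) auto
    finally show ?thesis using E(1) 0 by blast
  next
    case (Suc \<alpha>')
    obtain G where G: "G \<in> iterate_partition \<alpha>' \<beta>" "\<VV> (k, Suc n) \<subseteq> G"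
      using Umn_mem_subset[OF Xbar_Umn[OF \<VV>, of k "Suc n"], of \<alpha>' \<beta>] Suc \<open>\<alpha> \<le> k\<close> \<open>\<beta> \<le> n\<close> by auto
    obtain H where H: "H \<in> Tfwd T \<U> \<U>" "\<VV> (k, Suc n) \<subseteq> H"
      using Umn_mem_subset[OF Xbar_Umn[OF \<VV>, of k "Suc n"], of 0 1] by auto
    have "H \<inter> T ` U \<noteq> {}" using H(2) in_image ne by blast
    then have "H \<subseteq> T ` U" using Tfwd_mem_subset_image[OF H(1) U] by blast
    moreover have "G \<inter> H \<in> pjoin (iterate_partition \<alpha>' \<beta>) (Tfwd T \<U> \<U>)"
      unfolding pjoin_def using G H ne by blast
    ultimately have "piece_preimage U (G \<inter> H) \<in> Tinv T \<U> (iterate_partition \<alpha>' \<beta>)"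
      by (intro Tinv_memI[OF U]) auto
    then have "piece_preimage U (G \<inter> H) \<in> iterate_partition \<alpha> \<beta>" using Suc by simp
    moreover have "piece_preimage U (\<VV> (k, Suc n)) \<subseteq> piece_preimage U (G \<inter> H)"
      using G H by blast
    ultimately show ?thesis by blast
  qed
qed

lemma Umn_10_mem_Tinv:
  assumes A: "A \<in> Umn T \<U> 1 0"
  shows "A \<in> Tinv T \<U> \<U>"
proof -
  obtain A' where A': "A' \<in> Tinv T \<U> \<U>" "A \<subseteq> A'"
    using Umn_mem_subset[OF A, of 1 0] by auto
  then obtain U' Y where Y: "U' \<in> \<U>" "Y \<subseteq> T ` U'" "A' = piece_preimage U' Y"
    unfolding Tinv_def by blast
  have "A' \<subseteq> U'" unfolding Y(3) by (rule piece_preimage_subset[OF Y(1,2)])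
  have "\<exists>E\<in>Umn T \<U> 1 0. A' \<subseteq> E"
  proof (rule subset_Umn_memI)
    show "A' \<noteq> {}" using Umn_mem_nonempty[OF A] A'(2) by blast
    fix \<alpha> \<beta> :: nat assume "\<alpha> \<le> 1" "\<beta> \<le> 0"
    then consider "\<alpha> = 0" "\<beta> = 0" | "\<alpha> = 1" "\<beta> = 0" by linarith
    then show "\<exists>B\<in>iterate_partition \<alpha> \<beta>. A' \<subseteq> B"
      by cases (use Y(1) \<open>A' \<subseteq> U'\<close> A'(1) in auto)
  qed
  then obtain E where "E \<in> Umn T \<U> 1 0" "A' \<subseteq> E" by blast
  moreover from this(2) A'(2) have "A \<subseteq> E" by (rule order_trans[rotated])
  ultimately have "E = A" using Umn_unique[OF _ A _ order_refl Umn_mem_nonempty[OF A]] by blast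
  with \<open>A' \<subseteq> E\<close> A'(2) have "A' = A" by auto
  with A'(1) show ?thesis by simp
qed

lemma pjoin_mem_Umn_01:
  assumes Y: "Y \<in> pjoin \<U> (Tfwd T \<U> \<U>)"
  shows "Y \<in> Umn T \<U> 0 1"
proof -
  obtain G H where GH: "G \<in> \<U>" "H \<in> Tfwd T \<U> \<U>" "Y = G \<inter> H" "Y \<noteq> {}"
    using Y unfolding pjoin_def by blast
  have "\<exists>E\<in>Umn T \<U> 0 1. Y \<subseteq> E"
  proof (rule subset_Umn_memI)
    show "Y \<noteq> {}" by (rule GH(4))
    fix \<alpha> \<beta> :: nat assume "\<alpha> \<le> 0" "\<beta> \<le> 1"
    then consider "\<alpha> = 0" "\<beta> = 0" | "\<alpha> = 0" "\<beta> = 1" by linarith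
    then show "\<exists>A\<in>iterate_partition \<alpha> \<beta>. Y \<subseteq> A"
      by cases (use GH in auto)
  qed
  then obtain E where E: "E \<in> Umn T \<U> 0 1" "Y \<subseteq> E" by blast
  obtain G' where "G' \<in> \<U>" "E \<subseteq> G'" using Umn_mem_subset[OF E(1), of 0 0] by auto
  moreover obtain H' where "H' \<in> Tfwd T \<U> \<U>" "E \<subseteq> H'" using Umn_mem_subset[OF E(1), of 0 1] by auto
  ultimately have "G' = G" "H' = H"
    using disjoint_nonempty_unique[OF disjoint_nonempty_partition, of G' G Y]
      disjoint_nonempty_unique[OF disjoint_nonempty_Tfwd[OF disjoint_nonempty_partition], of H' H Y]
      E(2) GH by auto
  with \<open>E \<subseteq> G'\<close> \<open>E \<subseteq> H'\<close> E(2) GH(3) have "Y = E" by blast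
  with E(1) show ?thesis by simp
qed

lemma Xbar_10_eq_piece_preimage:
  assumes "\<UU> \<in> Xbar T \<U>"
  obtains U V where "U \<in> \<U>" "V \<in> Umn T \<U> 0 1" "V \<subseteq> T ` U" "\<UU> (1, 0) = piece_preimage U V"
proof -
  have "\<UU> (1, 0) \<in> Tinv T \<U> \<U>" by (rule Umn_10_mem_Tinv[OF Xbar_Umn[OF assms]])
  then obtain U V where "U \<in> \<U>" "V \<in> pjoin \<U> (Tfwd T \<U> \<U>)" "V \<subseteq> T ` U"
    "\<UU> (1, 0) = piece_preimage U V" unfolding Tinv_def by blast
  with pjoin_mem_Umn_01 that show ?thesis by blast
qed

lemma continuous_map_Tprime: "continuous_map (Xprime_top T \<U>) (Xprime_top T \<U>) (Tprime T \<U>)"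
proof (rule continuous_map_into_Xprime_top)
  show "continuous_map (Xprime_top T \<U>) euclidean (\<lambda>q. fst (Tprime T \<U> q))"
    using continuous_map_compose[OF continuous_map_Xprime_fst, of euclidean T] continuous_T
    by (simp add: Tprime_def o_def)
  show "continuous_map (Xprime_top T \<U>) (Xbar_top T \<U>) (\<lambda>q. snd (Tprime T \<U> q))"
  proof (rule continuous_map_into_Xbar_top)
    show "snd (Tprime T \<U> q) \<in> Xbar T \<U>" if "q \<in> topspace (Xprime_top T \<U>)" for q
      using that Tbar_in_Xbar by (auto simp: topspace_Xprime_top Xprime_def Tprime_def)
    fix i :: "nat \<times> nat"
    obtain k n where i: "i = (k, n)" by fastforce
    show "continuous_map (Xprime_top T \<U>) (discrete_topology UNIV) (\<lambda>q. snd (Tprime T \<U> q) i)"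
      using continuous_map_Xprime_coordinate[of T \<U> "\<lambda>S. THE V. V \<in> Umn T \<U> k n \<and> T ` S \<subseteq> V" "(Suc k, n)"]
      by (simp add: Tprime_def Tbar_def i)
  qed
  show "Tprime T \<U> q \<in> Xprime T \<U>" if "q \<in> topspace (Xprime_top T \<U>)" for q
    using that Tprime_in_Xprime by (simp add: topspace_Xprime_top)
qed

end

section \<open>Local inverses of \<open>T'\<close>\<close>

locale piecewise_invertible_branch = piecewise_invertible_map +
  fixes U :: "'a set" and V :: "'a set"
  assumes piece: "U \<in> \<U>"
    and V_Umn: "V \<in> Umn T \<U> 0 1"
    and V_subset: "V \<subseteq> T ` U"
    and preimage_V_Umn: "piece_preimage U V \<in> Umn T \<U> 1 0"
begin

definition W :: "('a \<times> (nat \<times> nat \<Rightarrow> 'a set)) set" where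
  "W = {q \<in> Xprime T \<U>. snd q (1, 0) = piece_preimage U V}"

definition TW :: "('a \<times> (nat \<times> nat \<Rightarrow> 'a set)) set" where
  "TW = {q \<in> Xprime T \<U>. snd q (0, 1) = V}"

definition piece_inverse :: "'a \<Rightarrow> 'a" where
  "piece_inverse = (SOME g. homeomorphism (closure U) (T ` closure U) T g)"

definition pullback :: "(nat \<times> nat \<Rightarrow> 'a set) \<Rightarrow> (nat \<times> nat \<Rightarrow> 'a set)" where
  "pullback \<VV> = (\<lambda>(k, n). THE E. E \<in> Umn T \<U> k n \<and> piece_preimage U (\<VV> (k, Suc n)) \<subseteq> E)"

definition local_inverse :: "'a \<times> (nat \<times> nat \<Rightarrow> 'a set) \<Rightarrow> 'a \<times> (nat \<times> nat \<Rightarrow> 'a set)" where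
  "local_inverse q = (piece_inverse (fst q), pullback (snd q))"

lemma homeomorphism_piece_inverse:
  "homeomorphism (closure U) (T ` closure U) T piece_inverse"
  unfolding piece_inverse_def using homeomorphism_piece[OF piece] by (rule someI_ex)

lemma piece_inverse_T: "x \<in> closure U \<Longrightarrow> piece_inverse (T x) = x"
  by (rule homeomorphism_apply1[OF homeomorphism_piece_inverse])

lemma T_piece_inverse: "y \<in> T ` closure U \<Longrightarrow> T (piece_inverse y) = y"
  by (rule homeomorphism_apply2[OF homeomorphism_piece_inverse])

lemma image_piece_inverse:
  assumes "Y \<subseteq> T ` U"
  shows "piece_inverse ` Y = piece_preimage U Y"
proof -
  have "piece_inverse ` Y = piece_inverse ` T ` piece_preimage U Y"
    using image_piece_preimage[OF assms] by simp
  also have "\<dots> = piece_preimage U Y"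
    using piece_inverse_T by (force simp: image_image)
  finally show ?thesis .
qed

lemma pullback_eqI:
  assumes "\<VV> \<in> Xbar T \<U>" "\<VV> (0, 1) \<subseteq> T ` U"
    and "E \<in> Umn T \<U> k n" "piece_preimage U (\<VV> (k, Suc n)) \<subseteq> E"
  shows "pullback \<VV> (k, n) = E"
  unfolding pullback_def prod.case
  by (rule the_Umn_superset_eq[OF piece_preimage_Xbar_nonempty[OF assms(1,2)] assms(3,4)])

lemma
  assumes "\<VV> \<in> Xbar T \<U>" "\<VV> (0, 1) \<subseteq> T ` U"
  shows pullback_Umn: "pullback \<VV> (k, n) \<in> Umn T \<U> k n"
    and piece_preimage_subset_pullback: "piece_preimage U (\<VV> (k, Suc n)) \<subseteq> pullback \<VV> (k, n)"
proof -
  obtain E where "E \<in> Umn T \<U> k n" "piece_preimage U (\<VV> (k, Suc n)) \<subseteq> E"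
    using piece_preimage_subset_Umn[OF assms(1) piece assms(2)] by blast
  with pullback_eqI[OF assms this] show "pullback \<VV> (k, n) \<in> Umn T \<U> k n"
    "piece_preimage U (\<VV> (k, Suc n)) \<subseteq> pullback \<VV> (k, n)" by simp_all
qed

lemma pullback_in_Xbar:
  assumes \<VV>: "\<VV> \<in> Xbar T \<U>" "\<VV> (0, 1) \<subseteq> T ` U"
  shows "pullback \<VV> \<in> Xbar T \<U>"
proof (rule Xbar_memI[where S = "\<lambda>m n. piece_preimage U (\<VV> (m, Suc n))"])
  show "pullback \<VV> (m, n) \<in> Umn T \<U> m n" for m n by (rule pullback_Umn[OF \<VV>])
  show "piece_preimage U (\<VV> (m, Suc n)) \<subseteq> pullback \<VV> (m, n)" for m n
    by (rule piece_preimage_subset_pullback[OF \<VV>])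
  show "piece_preimage U (\<VV> (m, Suc n)) \<noteq> {}" for m n by (rule piece_preimage_Xbar_nonempty[OF \<VV>])
  show "piece_preimage U (\<VV> (m', Suc n')) \<subseteq> piece_preimage U (\<VV> (m, Suc n))"
    if "m \<le> m'" "n \<le> n'" for m n m' n'
    using Xbar_antimono[OF \<VV>(1), of m m' "Suc n" "Suc n'"] that by auto
qed

lemma
  assumes "q \<in> TW"
  shows TW_Xbar: "snd q \<in> Xbar T \<U>"
    and TW_01_subset: "snd q (0, 1) \<subseteq> T ` U"
    and TW_closure: "fst q \<in> closure (snd q (k, n))"
    and TW_fst: "fst q \<in> T ` closure U"
proof -
  have X: "snd q \<in> Xbar T \<U>" and cl: "\<And>k n. fst q \<in> closure (snd q (k, n))"
    using assms unfolding TW_def Xprime_def by auto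
  have sub: "snd q (0, 1) \<subseteq> T ` U" using assms V_subset unfolding TW_def by auto
  show "snd q \<in> Xbar T \<U>" "snd q (0, 1) \<subseteq> T ` U" "fst q \<in> closure (snd q (k, n))"
    by (fact X sub cl)+
  show "fst q \<in> T ` closure U"
    using cl[of 0 1] closure_Xbar_subset_image_piece[OF X sub, of 0 0] by auto
qed

lemma local_inverse_in_W:
  assumes "q \<in> TW"
  shows "local_inverse q \<in> W"
proof -
  note X = TW_Xbar[OF assms] and sub = TW_01_subset[OF assms]
  have "piece_inverse (fst q) \<in> closure (pullback (snd q) (k, n))" for k n
  proof -
    have "piece_inverse ` closure (snd q (k, Suc n)) \<subseteq> closure (piece_inverse ` snd q (k, Suc n))"
      using closure_Xbar_subset_image_piece[OF X sub]
      by (rule continuous_image_closure_subset[OF homeomorphism_cont2[OF homeomorphism_piece_inverse]])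
    also have "\<dots> \<subseteq> closure (pullback (snd q) (k, n))"
      unfolding image_piece_inverse[OF Xbar_subset_image_piece[OF X sub]]
      by (rule closure_mono[OF piece_preimage_subset_pullback[OF X sub]])
    finally show ?thesis using TW_closure[OF assms] by blast
  qed
  moreover have "pullback (snd q) (1, 0) = piece_preimage U V"
  proof (rule pullback_eqI[OF X sub preimage_V_Umn])
    have "snd q (1, Suc 0) \<subseteq> snd q (0, 1)" by (rule Xbar_antimono[OF X]) simp_all
    with assms show "piece_preimage U (snd q (1, Suc 0)) \<subseteq> piece_preimage U V"
      unfolding TW_def by auto
  qed
  ultimately show ?thesis
    using pullback_in_Xbar[OF X sub] unfolding W_def local_inverse_def Xprime_def by simp
qed

lemma Tprime_local_inverse:
  assumes "q \<in> TW"
  shows "Tprime T \<U> (local_inverse q) = q"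
proof -
  note X = TW_Xbar[OF assms] and sub = TW_01_subset[OF assms]
  note X' = pullback_in_Xbar[OF X sub]
  have "Tbar T \<U> (pullback (snd q)) (k, n) = snd q (k, n)" for k n
  proof (rule Umn_unique[OF Tbar_Umn[OF X'] Xbar_Umn[OF X]])
    have "snd q (Suc k, Suc n) = T ` piece_preimage U (snd q (Suc k, Suc n))"
      by (rule image_piece_preimage[OF Xbar_subset_image_piece[OF X sub], symmetric])
    also have "\<dots> \<subseteq> T ` pullback (snd q) (Suc k, n)"
      using piece_preimage_subset_pullback[OF X sub] by blast
    also have "\<dots> \<subseteq> Tbar T \<U> (pullback (snd q)) (k, n)" by (rule image_subset_Tbar[OF X'])
    finally show "snd q (Suc k, Suc n) \<subseteq> Tbar T \<U> (pullback (snd q)) (k, n)" .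
    show "snd q (Suc k, Suc n) \<subseteq> snd q (k, n)" by (rule Xbar_antimono[OF X]) simp_all
    show "snd q (Suc k, Suc n) \<noteq> {}" by (rule Xbar_nonempty[OF X])
  qed
  then show ?thesis
    unfolding Tprime_def local_inverse_def using T_piece_inverse[OF TW_fst[OF assms]]
    by (simp add: prod_eq_iff fun_eq_iff)
qed

lemma
  assumes "q \<in> W"
  shows W_Xprime: "q \<in> Xprime T \<U>"
    and W_Xbar: "snd q \<in> Xbar T \<U>"
    and W_10: "snd q (1, 0) = piece_preimage U V"
    and W_closure: "fst q \<in> closure (snd q (k, n))"
  using assms unfolding W_def Xprime_def by auto

lemma Tprime_in_TW:
  assumes "q \<in> W"
  shows "Tprime T \<U> q \<in> TW"
proof -
  note X = W_Xbar[OF assms]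
  have "snd q (1, 1) \<subseteq> snd q (1, 0)" by (rule Xbar_antimono[OF X]) simp_all
  then have "T ` snd q (Suc 0, 1) \<subseteq> V" using W_10[OF assms] by auto
  then have "Tbar T \<U> (snd q) (0, 1) = V" by (rule Tbar_eqI[OF X V_Umn])
  with Tprime_in_Xprime[OF W_Xprime[OF assms]] show ?thesis
    unfolding TW_def Tprime_def by simp
qed

lemma local_inverse_Tprime:
  assumes "q \<in> W"
  shows "local_inverse (Tprime T \<U> q) = q"
proof -
  note X = W_Xbar[OF assms]
  have "fst q \<in> closure (piece_preimage U V)"
    using W_closure[OF assms, of 1 0] W_10[OF assms] by simp
  then have fst_q: "fst q \<in> closure U"
    using closure_mono[OF piece_preimage_subset[OF piece V_subset]] by blast
  have TW: "Tbar T \<U> (snd q) \<in> Xbar T \<U>" "Tbar T \<U> (snd q) (0, 1) \<subseteq> T ` U"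
    using TW_Xbar[OF Tprime_in_TW[OF assms]] TW_01_subset[OF Tprime_in_TW[OF assms]]
    by (simp_all add: Tprime_def)
  have "pullback (Tbar T \<U> (snd q)) (k, n) = snd q (k, n)" for k n
  proof -
    obtain E where E: "E \<in> Umn T \<U> k n" "piece_preimage U (Tbar T \<U> (snd q) (k, Suc n)) \<subseteq> E"
      using piece_preimage_subset_Umn[OF TW(1) piece TW(2)] by blast
    have "snd q (Suc k, Suc n) \<subseteq> piece_preimage U (Tbar T \<U> (snd q) (k, Suc n))"
    proof -
      have "snd q (Suc k, Suc n) \<subseteq> snd q (1, 0)" by (rule Xbar_antimono[OF X]) simp_all
      then have "snd q (Suc k, Suc n) \<subseteq> closure U" unfolding W_10[OF assms] by blast
      with image_subset_Tbar[OF X, of k "Suc n"] show ?thesis by blast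
    qed
    then have "snd q (Suc k, Suc n) \<subseteq> E" using E(2) by (rule order_trans)
    moreover have "snd q (Suc k, Suc n) \<subseteq> snd q (k, n)" by (rule Xbar_antimono[OF X]) simp_all
    ultimately have "E = snd q (k, n)"
      by (rule Umn_unique[OF E(1) Xbar_Umn[OF X] _ _ Xbar_nonempty[OF X]])
    with pullback_eqI[OF TW E] show ?thesis by simp
  qed
  then show ?thesis
    unfolding local_inverse_def Tprime_def using piece_inverse_T[OF fst_q]
    by (simp add: prod_eq_iff fun_eq_iff)
qed

lemma image_Tprime_W: "Tprime T \<U> ` W = TW"
proof
  show "Tprime T \<U> ` W \<subseteq> TW" using Tprime_in_TW by blast
  show "TW \<subseteq> Tprime T \<U> ` W"
  proof
    fix q assume "q \<in> TW"
    with local_inverse_in_W Tprime_local_inverse show "q \<in> Tprime T \<U> ` W" by (metis image_eqI)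
  qed
qed

lemma openin_W: "openin (Xprime_top T \<U>) W"
proof -
  have "openin (Xprime_top T \<U>) {q \<in> topspace (Xprime_top T \<U>). snd q (1, 0) \<in> {piece_preimage U V}}"
    by (rule openin_continuous_map_preimage[OF continuous_map_Xprime_coordinate[where \<phi> = id, unfolded id_def]]) simp
  then show ?thesis by (simp add: topspace_Xprime_top W_def)
qed

lemma openin_TW: "openin (Xprime_top T \<U>) TW"
proof -
  have "openin (Xprime_top T \<U>) {q \<in> topspace (Xprime_top T \<U>). snd q (0, 1) \<in> {V}}"
    by (rule openin_continuous_map_preimage[OF continuous_map_Xprime_coordinate[where \<phi> = id, unfolded id_def]]) simp
  then show ?thesis by (simp add: topspace_Xprime_top TW_def)
qed

lemma topspace_subtopology_W: "topspace (subtopology (Xprime_top T \<U>) W) = W"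
  using W_Xprime by (auto simp: topspace_Xprime_top)

lemma topspace_subtopology_TW: "topspace (subtopology (Xprime_top T \<U>) TW) = TW"
  by (auto simp: topspace_Xprime_top TW_def)

lemma continuous_map_local_inverse:
  "continuous_map (subtopology (Xprime_top T \<U>) TW) (Xprime_top T \<U>) local_inverse"
proof (rule continuous_map_into_Xprime_top)
  let ?Z = "subtopology (Xprime_top T \<U>) TW"
  have "continuous_map ?Z euclidean fst"
    by (rule continuous_map_from_subtopology[OF continuous_map_Xprime_fst])
  then have "continuous_map ?Z (top_of_set (T ` closure U)) fst"
    by (rule continuous_map_into_subtopology) (use TW_fst in \<open>auto simp: topspace_subtopology_TW\<close>)
  moreover have "continuous_map (top_of_set (T ` closure U)) euclidean piece_inverse"
    using homeomorphism_cont2[OF homeomorphism_piece_inverse] by simp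
  ultimately have "continuous_map ?Z euclidean (piece_inverse \<circ> fst)"
    by (rule continuous_map_compose)
  then show "continuous_map ?Z euclidean (\<lambda>q. fst (local_inverse q))"
    by (simp add: local_inverse_def o_def)
  show "continuous_map ?Z (Xbar_top T \<U>) (\<lambda>q. snd (local_inverse q))"
  proof (rule continuous_map_into_Xbar_top)
    show "snd (local_inverse q) \<in> Xbar T \<U>" if "q \<in> topspace ?Z" for q
      using that local_inverse_in_W W_Xbar by (simp add: topspace_subtopology_TW)
    fix i :: "nat \<times> nat"
    obtain k n where i: "i = (k, n)" by fastforce
    show "continuous_map ?Z (discrete_topology UNIV) (\<lambda>q. snd (local_inverse q) i)"
      using continuous_map_from_subtopology[OF continuous_map_Xprime_coordinate[of T \<U>
          "\<lambda>S. THE E. E \<in> Umn T \<U> k n \<and> piece_preimage U S \<subseteq> E" "(k, Suc n)"]]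
      by (simp add: local_inverse_def pullback_def i)
  qed
  show "local_inverse q \<in> Xprime T \<U>" if "q \<in> topspace ?Z" for q
    using that local_inverse_in_W W_Xprime by (simp add: topspace_subtopology_TW)
qed

lemma homeomorphic_map_Tprime_W:
  "homeomorphic_map (subtopology (Xprime_top T \<U>) W) (subtopology (Xprime_top T \<U>) TW) (Tprime T \<U>)"
  unfolding homeomorphic_map_maps homeomorphic_maps_def
proof (intro exI conjI ballI)
  show "continuous_map (subtopology (Xprime_top T \<U>) W) (subtopology (Xprime_top T \<U>) TW) (Tprime T \<U>)"
    by (rule continuous_map_into_subtopology[OF continuous_map_from_subtopology[OF continuous_map_Tprime]])
      (use Tprime_in_TW in \<open>auto simp: topspace_subtopology_W\<close>)
  show "continuous_map (subtopology (Xprime_top T \<U>) TW) (subtopology (Xprime_top T \<U>) W) local_inverse"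
    by (rule continuous_map_into_subtopology[OF continuous_map_local_inverse])
      (use local_inverse_in_W in \<open>auto simp: topspace_subtopology_TW\<close>)
  show "local_inverse (Tprime T \<U> q) = q" if "q \<in> topspace (subtopology (Xprime_top T \<U>) W)" for q
    using that local_inverse_Tprime by (simp add: topspace_subtopology_W)
  show "Tprime T \<U> (local_inverse q) = q" if "q \<in> topspace (subtopology (Xprime_top T \<U>) TW)" for q
    using that Tprime_local_inverse by (simp add: topspace_subtopology_TW)
qed

end

theorem proposition5p5:
  fixes T :: "'a::t2_space \<Rightarrow> 'a" and \<U> :: "'a set set"
  assumes "compact (UNIV :: 'a set)"
    and "piecewise_invertible T \<U>"
  shows "local_homeomorphism (Xprime_top T \<U>) (Xprime_top T \<U>) (Tprime T \<U>)"
  unfolding local_homeomorphism_def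
proof (intro conjI ballI)
  interpret piecewise_invertible_map T \<U> using assms by unfold_locales
  show "Tprime T \<U> ` topspace (Xprime_top T \<U>) \<subseteq> topspace (Xprime_top T \<U>)"
    using Tprime_in_Xprime by (auto simp: topspace_Xprime_top)
  fix p assume "p \<in> topspace (Xprime_top T \<U>)"
  then have p: "p \<in> Xprime T \<U>" by (simp add: topspace_Xprime_top)
  then have X: "snd p \<in> Xbar T \<U>" unfolding Xprime_def by auto
  then obtain U V where "U \<in> \<U>" "V \<in> Umn T \<U> 0 1" "V \<subseteq> T ` U"
    and p10: "snd p (1, 0) = piece_preimage U V"
    by (rule Xbar_10_eq_piece_preimage)
  moreover have "piece_preimage U V \<in> Umn T \<U> 1 0"
    unfolding p10[symmetric] by (rule Xbar_Umn[OF X])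
  ultimately interpret piecewise_invertible_branch T \<U> U V
    using assms by unfold_locales
  have "p \<in> W" using p p10 by (simp add: W_def)
  then show "\<exists>W. openin (Xprime_top T \<U>) W \<and> p \<in> W \<and> openin (Xprime_top T \<U>) (Tprime T \<U> ` W) \<and>
      homeomorphic_map (subtopology (Xprime_top T \<U>) W)
        (subtopology (Xprime_top T \<U>) (Tprime T \<U> ` W)) (Tprime T \<U>)"
    using openin_W openin_TW homeomorphic_map_Tprime_W image_Tprime_W by metis
qed

end
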